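(* Let $G$ be a finite simple graph and let $2\leq k\leq\operatorname{mat}(G)$. If $M$ is a $k$-admissable matching of $G$, then either $M$ is a $(k-1)$-admissable matching, or there exists an edge $e\in M$ such that $M\setminus\{e\}$ is a $(k-1)$-admissable matching. Consequently, $\operatorname{aim}(G,k)\leq\operatorname{aim}(G,k-1)+1$.
   Context: $\operatorname{mat}(G)$ is the matching number. Two edges form a gap if they are disjoint and no edge of $G$ joins a vertex of one to a vertex of the other. A sequence $(a_1,\dots,a_n)$ of integers is $k$-admissable if $a_i\ge1$ and $\sum a_i\le n+k-1$. For $1\le k\le\operatorname{mat}(G)$, a matching $M$ is $k$-admissable if there are nonempty pairwise disjoint $M_1,\dots,M_r\subseteq M$ with union $M$ such that edges from different $M_i$'s always form a gap in $G$, $(|M_1|,\dots,|M_r|)$ is $k$-admissable, and the induced subgraph of $G$ on $\bigcup_{e\in M_i}e$ is a forest for each $i$. $\operatorname{aim}(G,k)$ is the maximum size of a $k$-admissable matching ($0$ if none). *)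

theory Defs
  imports Main
begin

definition simple_graph :: "'a set \<Rightarrow> 'a set set \<Rightarrow> bool" where
  "simple_graph V E \<longleftrightarrow> finite V \<and> (\<forall>e\<in>E. e \<subseteq> V \<and> card e = 2)"

definition matching :: "'a set set \<Rightarrow> 'a set set \<Rightarrow> bool" where
  "matching E M \<longleftrightarrow> M \<subseteq> E \<and> (\<forall>e\<in>M. \<forall>f\<in>M. e \<noteq> f \<longrightarrow> e \<inter> f = {})"

definition mat :: "'a set set \<Rightarrow> nat" where
  "mat E = Max {card M | M. matching E M}"

definition gap :: "'a set set \<Rightarrow> 'a set \<Rightarrow> 'a set \<Rightarrow> bool" where
  "gap E e f \<longleftrightarrow> e \<inter> f = {} \<and> (\<forall>x\<in>e. \<forall>y\<in>f. {x, y} \<notin> E)"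

definition induced_forest :: "'a set set \<Rightarrow> 'a set \<Rightarrow> bool" where
  "induced_forest E S \<longleftrightarrow>
     \<not> (\<exists>vs. length vs \<ge> 3 \<and> distinct vs \<and> set vs \<subseteq> S \<and>
           (\<forall>i < length vs. {vs ! i, vs ! ((i + 1) mod length vs)} \<in> E))"

definition k_admissable_seq :: "nat \<Rightarrow> nat list \<Rightarrow> bool" where
  "k_admissable_seq k as \<longleftrightarrow>
     (\<forall>a\<in>set as. a \<ge> 1) \<and> int (sum_list as) \<le> int (length as) + int k - 1"

definition k_admissable_matching :: "'a set set \<Rightarrow> nat \<Rightarrow> 'a set set \<Rightarrow> bool" where
  "k_admissable_matching E k M \<longleftrightarrow> matching E M \<and>
     (\<exists>Ms :: 'a set set list.
        (\<forall>i < length Ms. Ms ! i \<noteq> {}) \<and>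
        (\<forall>i < length Ms. \<forall>j < length Ms. i \<noteq> j \<longrightarrow> Ms ! i \<inter> Ms ! j = {}) \<and>
        \<Union> (set Ms) = M \<and>
        (\<forall>i < length Ms. \<forall>j < length Ms. i \<noteq> j \<longrightarrow>
            (\<forall>e\<in>Ms ! i. \<forall>f\<in>Ms ! j. gap E e f)) \<and>
        k_admissable_seq k (map card Ms) \<and>
        (\<forall>i < length Ms. induced_forest E (\<Union> (Ms ! i))))"

definition aim :: "'a set set \<Rightarrow> nat \<Rightarrow> nat" where
  "aim E k = Max (insert 0 {card M | M. k_admissable_matching E k M})"

end

theory Submission
  imports Defs
begin

text \<open>
  Let a partition \<open>M\<^sub>1, \<dots>, M\<^sub>r\<close> witness that \<open>M\<close> is \<open>k\<close>-admissable, so that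
  \<open>\<Sum> |M\<^sub>i| \<le> r + k - 1\<close>. If even \<open>\<Sum> |M\<^sub>i| \<le> r + k - 2\<close>, the same partition shows
  that \<open>M\<close> is \<open>(k-1)\<close>-admissable. Otherwise \<open>\<Sum> |M\<^sub>i| = r + k - 1 > r\<close>, so some block
  contains two edges; deleting one of them keeps all blocks nonempty, lowers the sum by one,
  and preserves the gap and forest conditions, which pass to subsets.
\<close>

definition gap_forest_partition :: "'a set set \<Rightarrow> 'a set set \<Rightarrow> 'a set set list \<Rightarrow> bool" where
  "gap_forest_partition E M Ms \<longleftrightarrow>
     (\<forall>i < length Ms. Ms ! i \<noteq> {}) \<and>
     (\<forall>i < length Ms. \<forall>j < length Ms. i \<noteq> j \<longrightarrow> Ms ! i \<inter> Ms ! j = {}) \<and>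
     \<Union> (set Ms) = M \<and>
     (\<forall>i < length Ms. \<forall>j < length Ms. i \<noteq> j \<longrightarrow> (\<forall>e\<in>Ms ! i. \<forall>f\<in>Ms ! j. gap E e f)) \<and>
     (\<forall>i < length Ms. induced_forest E (\<Union> (Ms ! i)))"

lemma k_admissable_matching_iff:
  "k_admissable_matching E k M \<longleftrightarrow>
     matching E M \<and> (\<exists>Ms. gap_forest_partition E M Ms \<and> k_admissable_seq k (map card Ms))"
  unfolding k_admissable_matching_def gap_forest_partition_def by blast

lemma matching_subset: "matching E M \<Longrightarrow> N \<subseteq> M \<Longrightarrow> matching E N"
  unfolding matching_def by blast

lemma induced_forest_subset: "induced_forest E S \<Longrightarrow> T \<subseteq> S \<Longrightarrow> induced_forest E T"
  unfolding induced_forest_def by blast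

lemma sum_list_le_length:
  "\<forall>x\<in>set xs. x \<le> 1 \<Longrightarrow> sum_list xs \<le> (length xs :: nat)"
  by (induction xs) auto

lemma k_admissable_seq_step:
  assumes "2 \<le> k" and adm: "k_admissable_seq k as"
  shows "k_admissable_seq (k - 1) as \<or>
         (\<exists>i < length as. 2 \<le> as ! i \<and> k_admissable_seq (k - 1) (as[i := as ! i - 1]))"
proof (cases "k_admissable_seq (k - 1) as")
  case False
  with assms have tight: "sum_list as = length as + k - 1"
    unfolding k_admissable_seq_def by auto
  then have "\<not> (\<forall>x\<in>set as. x \<le> 1)"
    using sum_list_le_length[of as] \<open>2 \<le> k\<close> by linarith
  then obtain i where i: "i < length as" and big: "2 \<le> as ! i"
    by (auto simp: in_set_conv_nth)
  have "sum_list (as[i := as ! i - 1]) = sum_list as - 1"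
    using i big by (simp add: sum_list_update)
  moreover have "\<forall>x\<in>set (as[i := as ! i - 1]). 1 \<le> x"
    using adm big set_update_subset_insert[of as i]
    unfolding k_admissable_seq_def by fastforce
  ultimately have "k_admissable_seq (k - 1) (as[i := as ! i - 1])"
    using tight \<open>2 \<le> k\<close> unfolding k_admissable_seq_def by simp
  with i big show ?thesis by blast
qed simp

lemma gap_forest_partition_remove:
  assumes part: "gap_forest_partition E M Ms" and i: "i < length Ms"
    and big: "2 \<le> card (Ms ! i)" and e: "e \<in> Ms ! i"
  shows "gap_forest_partition E (M - {e}) (Ms[i := Ms ! i - {e}])"
proof -
  from part have nonempty: "\<forall>j < length Ms. Ms ! j \<noteq> {}"
    and disjoint: "\<forall>j < length Ms. \<forall>l < length Ms. j \<noteq> l \<longrightarrow> Ms ! j \<inter> Ms ! l = {}"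
    and union: "\<Union> (set Ms) = M"
    and gaps: "\<forall>j < length Ms. \<forall>l < length Ms. j \<noteq> l \<longrightarrow> (\<forall>f\<in>Ms ! j. \<forall>g\<in>Ms ! l. gap E f g)"
    and forests: "\<forall>j < length Ms. induced_forest E (\<Union> (Ms ! j))"
    unfolding gap_forest_partition_def by blast+
  have e_only: "e \<notin> Ms ! j" if "j < length Ms" "j \<noteq> i" for j
    using disjoint that i e by blast
  have "Ms[i := Ms ! i - {e}] ! j = Ms ! j - {e}" if "j < length Ms" for j
    using that i e_only[of j] by (cases "j = i") auto
  then have update_eq: "Ms[i := Ms ! i - {e}] = map (\<lambda>A. A - {e}) Ms"
    by (intro nth_equalityI) simp_all
  have "Ms ! i - {e} \<noteq> {}"
  proof
    assume "Ms ! i - {e} = {}"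
    then have "Ms ! i \<subseteq> {e}" by blast
    then show False using big card_mono[of "{e}" "Ms ! i"] by simp
  qed
  then have nonempty': "\<forall>j < length Ms. Ms ! j - {e} \<noteq> {}"
    using nonempty e_only by (metis Diff_empty Diff_insert0)
  have forests': "\<forall>j < length Ms. induced_forest E (\<Union> (Ms ! j - {e}))"
    using forests induced_forest_subset Union_mono Diff_subset by metis
  have disjoint': "\<forall>j < length Ms. \<forall>l < length Ms. j \<noteq> l \<longrightarrow> (Ms ! j - {e}) \<inter> (Ms ! l - {e}) = {}"
    using disjoint by blast
  have gaps': "\<forall>j < length Ms. \<forall>l < length Ms. j \<noteq> l \<longrightarrow> (\<forall>f\<in>Ms ! j - {e}. \<forall>g\<in>Ms ! l - {e}. gap E f g)"
    using gaps by blast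
  have "\<Union> (set (map (\<lambda>A. A - {e}) Ms)) = M - {e}"
    using union by auto
  with nonempty' disjoint' gaps' forests' show ?thesis
    unfolding update_eq gap_forest_partition_def by simp
qed

lemma k_admissable_matching_step:
  assumes "2 \<le> k" and "k_admissable_matching E k M"
  shows "k_admissable_matching E (k - 1) M \<or>
         (\<exists>e\<in>M. k_admissable_matching E (k - 1) (M - {e}))"
proof -
  obtain Ms where match: "matching E M" and part: "gap_forest_partition E M Ms"
    and seq: "k_admissable_seq k (map card Ms)"
    using assms(2) unfolding k_admissable_matching_iff by blast
  from k_admissable_seq_step[OF assms(1) seq] show ?thesis
  proof
    assume "k_admissable_seq (k - 1) (map card Ms)"
    then show ?thesis
      using match part unfolding k_admissable_matching_iff by blast
  next
    assume "\<exists>i < length (map card Ms). 2 \<le> map card Ms ! i \<and>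
      k_admissable_seq (k - 1) ((map card Ms)[i := map card Ms ! i - 1])"
    then obtain i where i: "i < length Ms" and big: "2 \<le> card (Ms ! i)"
      and seq': "k_admissable_seq (k - 1) ((map card Ms)[i := card (Ms ! i) - 1])"
      by auto
    obtain e where e: "e \<in> Ms ! i"
      using big by fastforce
    have "finite (Ms ! i)"
      using big card.infinite by fastforce
    then have "map card (Ms[i := Ms ! i - {e}]) = (map card Ms)[i := card (Ms ! i) - 1]"
      using e by (simp add: map_update)
    with seq' have "k_admissable_seq (k - 1) (map card (Ms[i := Ms ! i - {e}]))"
      by simp
    moreover have "matching E (M - {e})"
      using match by (rule matching_subset) blast
    moreover note gap_forest_partition_remove[OF part i big e]
    ultimately have "k_admissable_matching E (k - 1) (M - {e})"
      unfolding k_admissable_matching_iff by blast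
    moreover have "e \<in> M"
      using part i e unfolding gap_forest_partition_def by (metis UnionI nth_mem)
    ultimately show ?thesis by blast
  qed
qed

lemma simple_graph_finite_edges: "simple_graph V E \<Longrightarrow> finite E"
  unfolding simple_graph_def by (meson Pow_iff finite_Pow_iff finite_subset subsetI)

lemma finite_card_k_admissable_matchings:
  "finite E \<Longrightarrow> finite {card M | M. k_admissable_matching E k M}"
  unfolding k_admissable_matching_def matching_def
  by (rule finite_subset[of _ "{..card E}"]) (auto intro: card_mono)

lemma card_le_aim: "finite E \<Longrightarrow> k_admissable_matching E k M \<Longrightarrow> card M \<le> aim E k"
  unfolding aim_def by (rule Max_ge) (auto simp: finite_card_k_admissable_matchings)

lemma aim_le:
  assumes "finite E" and "\<And>M. k_admissable_matching E k M \<Longrightarrow> card M \<le> b"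
  shows "aim E k \<le> b"
  unfolding aim_def using assms by (intro Max.boundedI) (auto simp: finite_card_k_admissable_matchings)

theorem lemma3p5:
  fixes V :: "'a set" and E :: "'a set set" and k :: nat
  assumes "simple_graph V E"
    and "2 \<le> k" and "k \<le> mat E"
  shows "(\<forall>M. k_admissable_matching E k M \<longrightarrow>
            k_admissable_matching E (k - 1) M \<or>
            (\<exists>e\<in>M. k_admissable_matching E (k - 1) (M - {e})))
         \<and> aim E k \<le> aim E (k - 1) + 1"
proof
  show step: "\<forall>M. k_admissable_matching E k M \<longrightarrow>
            k_admissable_matching E (k - 1) M \<or>
            (\<exists>e\<in>M. k_admissable_matching E (k - 1) (M - {e}))"
    using k_admissable_matching_step \<open>2 \<le> k\<close> by blast
  have "finite E"
    using \<open>simple_graph V E\<close> by (rule simple_graph_finite_edges)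
  then show "aim E k \<le> aim E (k - 1) + 1"
  proof (rule aim_le)
    fix M assume "k_admissable_matching E k M"
    with step consider "k_admissable_matching E (k - 1) M"
      | e where "e \<in> M" "k_admissable_matching E (k - 1) (M - {e})" by blast
    then show "card M \<le> aim E (k - 1) + 1"
    proof cases
      case 1
      then show ?thesis using card_le_aim[OF \<open>finite E\<close>] by fastforce
    next
      case 2
      then have "card (M - {e}) \<le> aim E (k - 1)"
        using card_le_aim[OF \<open>finite E\<close>] by blast
      then show ?thesis
        using \<open>e \<in> M\<close> by (cases "finite M") auto
    qed
  qed
qed

end
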